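(* Let $n\in\mathbb{N}$, $i\in\{1,\ldots,n\}$ and $x\in\mathcal{X}^n$. Then \[ x_i \ge \frac{1}{(n-i+1)(s_i-1)}, \] with equality if and only if $x = \bar x(i)$.
   Context: The Sylvester sequence: $s_1 = 2$, $s_i = \prod_{j=1}^{i-1} s_j + 1$ for $i\ge2$. $\mathcal{X}^n$ is the set of $x\in\mathbb{R}^n$ with $x_1+\cdots+x_n = 1$, $1 \ge x_1 \ge \cdots \ge x_n \ge 0$, and $x_1\cdots x_j \le x_{j+1}+\cdots+x_n$ for all $j\in\{1,\ldots,n-1\}$. For $l\in\{1,\ldots,n\}$, $\bar x(l) := \big(\frac{1}{s_1},\ldots,\frac{1}{s_{l-1}}, \frac{1}{(n-l+1)(s_l-1)},\ldots,\frac{1}{(n-l+1)(s_l-1)}\big)\in\mathbb{R}^n$ (last value repeated $n-l+1$ times). *)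

theory Defs
  imports Complex_Main
begin

fun sylv_prod :: "nat \<Rightarrow> nat" where
  "sylv_prod 0 = 1"
| "sylv_prod (Suc k) = sylv_prod k * (sylv_prod k + 1)"

(* Sylvester sequence, 1-indexed: s_i = s_1 * ... * s_(i-1) + 1, so s_1 = 2 *)
definition sylvester :: "nat \<Rightarrow> nat" where
  "sylvester i = sylv_prod (i - 1) + 1"

lemma sylvester_1: "sylvester 1 = 2"
  by (simp add: sylvester_def)

lemma sylv_prod_eq: "sylv_prod k = (\<Prod>j\<in>{1..k}. sylvester j)"
proof (induction k)
  case (Suc k) then show ?case by (simp add: sylvester_def prod.nat_ivl_Suc')
qed simp

(* Vectors in R^n represented as x :: nat \<Rightarrow> real with coordinates x 1, ..., x n;
   values outside {1..n} are irrelevant (required to be 0 for uniqueness). *)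
definition Xset :: "nat \<Rightarrow> (nat \<Rightarrow> real) set" where
  "Xset n = {x. (\<forall>k. k \<notin> {1..n} \<longrightarrow> x k = 0)
     \<and> (\<Sum>k=1..n. x k) = 1
     \<and> (n \<ge> 1 \<longrightarrow> x 1 \<le> 1 \<and> x n \<ge> 0)
     \<and> (\<forall>k\<in>{1..<n}. x k \<ge> x (k+1))
     \<and> (\<forall>j\<in>{1..<n}. (\<Prod>k=1..j. x k) \<le> (\<Sum>k=j+1..n. x k))}"

definition xbar :: "nat \<Rightarrow> nat \<Rightarrow> (nat \<Rightarrow> real)" where
  "xbar n l = (\<lambda>k. if 1 \<le> k \<and> k < l then 1 / real (sylvester k)
                  else if l \<le> k \<and> k \<le> n then 1 / (real (n - l + 1) * (real (sylvester l) - 1))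
                  else 0)"

end

theory Submission imports Defs begin

(* Write q_N = s_1 \<cdots> s_N = s_(N+1) - 1.  Call x "admissible of length N"
   if x_1 \<ge> ... \<ge> x_N \<ge> 0 and x_1 + ... + x_k + x_1 \<cdots> x_k \<le> 1 for all k \<le> N; every
   point of X^n restricted to its first N < n coordinates is admissible, with remainder
   1 - (x_1 + ... + x_N) = x_(N+1) + ... + x_n.  The heart of the proof is the bound

       (R)  1 - (x_1 + ... + x_N) \<ge> 1/q_N      for every admissible x of length N,

   proved by induction on N together with the auxiliary "slack" inequality
       (J)  1 - (x_1 + ... + x_N) - 1/q_N \<ge> x_N (1 - q_N x_1 \<cdots> x_N)   (strict if q_N x_1 \<cdots> x_N < 1).
   (R) and (J) at N give (R) at N+1 by a short computation; (J) at N follows from (R) at N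
   for all admissible vectors by lengthening the final constant block of x step by step,
   using the intermediate value theorem and the monotonicity of a one-variable polynomial.
   Tracking equalities through the same induction shows that equality in (R) forces
   x_k = 1/s_k for k \<le> N.  The theorem follows: the tail x_i + ... + x_n is at least
   1/q_(i-1) by (R) and at most (n-i+1) x_i by monotonicity, and equality throughout
   pins x down to xbar(i). *)

definition psum :: "(nat \<Rightarrow> real) \<Rightarrow> nat \<Rightarrow> real" where
  "psum x k = (\<Sum>j=1..k. x j)"

definition pprod :: "(nat \<Rightarrow> real) \<Rightarrow> nat \<Rightarrow> real" where
  "pprod x k = (\<Prod>j=1..k. x j)"

definition qs :: "nat \<Rightarrow> real" where
  "qs k = real (sylv_prod k)"

lemma psum_0 [simp]: "psum x 0 = 0" by (simp add: psum_def)
lemma psum_Suc [simp]: "psum x (Suc k) = psum x k + x (Suc k)" by (simp add: psum_def)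
lemma pprod_0 [simp]: "pprod x 0 = 1" by (simp add: pprod_def)
lemma pprod_Suc [simp]: "pprod x (Suc k) = pprod x k * x (Suc k)" by (simp add: pprod_def)
lemma qs_0 [simp]: "qs 0 = 1" by (simp add: qs_def)
lemma qs_Suc: "qs (Suc k) = qs k * (qs k + 1)" by (simp add: qs_def algebra_simps)

lemma qs_ge_1: "qs k \<ge> 1"
proof -
  have "sylv_prod k \<ge> 1" by (induction k) auto
  then show ?thesis by (simp add: qs_def)
qed

lemma sylvester_eq_qs: "real (sylvester k) = qs (k - 1) + 1"
  by (simp add: sylvester_def qs_def)

lemma descending_le:
  fixes x :: "nat \<Rightarrow> real"
  assumes desc: "\<forall>k\<in>{1..<n}. x (Suc k) \<le> x k" and "1 \<le> j" "j \<le> k" "k \<le> n"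
  shows "x k \<le> x j"
  using assms(3,4)
proof (induction k rule: dec_induct)
  case (step m)
  then have "x (Suc m) \<le> x m" using desc \<open>1 \<le> j\<close> by auto
  with step.IH step.prems show ?case by simp
qed simp

lemma descending_tail_sum:
  fixes x :: "nat \<Rightarrow> real"
  assumes desc: "\<forall>k\<in>{1..<n}. x (Suc k) \<le> x k" and i: "1 \<le> i" "i \<le> n"
  shows "(\<Sum>j=i..n. x j) \<le> real (n - i + 1) * x i"
    and "(\<Sum>j=i..n. x j) = real (n - i + 1) * x i \<Longrightarrow> j \<in> {i..n} \<Longrightarrow> x j = x i"
proof -
  have le: "x j \<le> x i" if "j \<in> {i..n}" for j
    using descending_le[OF desc i(1)] that by auto
  have card: "(\<Sum>j=i..n. x i) = real (n - i + 1) * x i" using i by simp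
  show "(\<Sum>j=i..n. x j) \<le> real (n - i + 1) * x i"
    using sum_mono[of "{i..n}" x "\<lambda>_. x i"] le unfolding card by blast
  assume "(\<Sum>j=i..n. x j) = real (n - i + 1) * x i" and j: "j \<in> {i..n}"
  then have "(\<Sum>j=i..n. x i - x j) = 0" using card by (simp add: sum_subtractf)
  then have "\<forall>j\<in>{i..n}. x i - x j = 0" using le by (subst (asm) sum_nonneg_eq_0_iff) auto
  then show "x j = x i" using j by auto
qed

text \<open>The constraints of X^n that involve only the first N coordinates.\<close>
definition admissible :: "nat \<Rightarrow> (nat \<Rightarrow> real) \<Rightarrow> bool" where
  "admissible N x \<longleftrightarrow> (\<forall>k\<in>{1..N}. 0 \<le> x k) \<and> (\<forall>k\<in>{1..<N}. x (Suc k) \<le> x k)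
     \<and> (\<forall>k\<in>{1..N}. psum x k + pprod x k \<le> 1)"

lemma admissible_mono: "admissible N x \<Longrightarrow> M \<le> N \<Longrightarrow> admissible M x"
  unfolding admissible_def by auto

lemma admissible_nonneg: "admissible N x \<Longrightarrow> 1 \<le> k \<Longrightarrow> k \<le> N \<Longrightarrow> 0 \<le> x k"
  unfolding admissible_def by auto

lemma admissible_constr: "admissible N x \<Longrightarrow> 1 \<le> k \<Longrightarrow> k \<le> N \<Longrightarrow> psum x k + pprod x k \<le> 1"
  unfolding admissible_def by auto

lemma admissible_le: "admissible N x \<Longrightarrow> 1 \<le> j \<Longrightarrow> j \<le> k \<Longrightarrow> k \<le> N \<Longrightarrow> x k \<le> x j"
  unfolding admissible_def by (intro descending_le) auto

text \<open>The constraint for k = 1 reads 2 x_1 \<le> 1, so every coordinate is at most 1/2.\<close>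
lemma admissible_le_half:
  assumes "admissible N x" "1 \<le> k" "k \<le> N"
  shows "x k \<le> 1/2"
proof -
  have "x 1 \<le> 1/2" using admissible_constr[OF assms(1), of 1] assms by simp
  then show ?thesis using admissible_le[OF assms(1) _ assms(2,3)] by fastforce
qed

lemma admissible_pprod_bounds:
  assumes "admissible N x" "d \<le> N"
  shows "0 \<le> pprod x d" "pprod x d \<le> 1"
proof -
  have "0 \<le> x k \<and> x k \<le> 1" if "k \<in> {1..d}" for k
    using that assms admissible_le_half[OF assms(1), of k] admissible_nonneg[OF assms(1), of k]
    by auto
  then show "0 \<le> pprod x d" "pprod x d \<le> 1"
    unfolding pprod_def by (auto intro!: prod_nonneg prod_le_1)
qed

section \<open>The remainder bound (R) and the slack bound (J)\<close>

definition remainder_bound :: "nat \<Rightarrow> (nat \<Rightarrow> real) \<Rightarrow> bool" where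
  "remainder_bound N x \<longleftrightarrow> 1 / qs N \<le> 1 - psum x N"

definition slack_bound :: "nat \<Rightarrow> (nat \<Rightarrow> real) \<Rightarrow> bool" where
  "slack_bound N x \<longleftrightarrow> x N * (1 - qs N * pprod x N) \<le> 1 - psum x N - 1 / qs N
     \<and> (qs N * pprod x N < 1 \<longrightarrow> x N * (1 - qs N * pprod x N) < 1 - psum x N - 1 / qs N)"

text \<open>(R) and (J) at N bound the remainder after N+1 coordinates from below in terms of
  the product at N+1: split according to the sign of 1 - q_N p_N and use x_(N+1) \<le> x_N
  (with J) or x_(N+1) \<ge> 0 (with R).\<close>
lemma remainder_step:
  assumes prev: "N \<ge> 1 \<Longrightarrow> remainder_bound N x \<and> slack_bound N x"
    and adm: "admissible (Suc N) x"
  shows "1 / qs N - qs N * pprod x (Suc N) \<le> 1 - psum x (Suc N)"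
proof (cases "N = 0")
  case False
  then have R: "1 / qs N \<le> 1 - psum x N"
    and J: "x N * (1 - qs N * pprod x N) \<le> 1 - psum x N - 1 / qs N"
    using prev unfolding remainder_bound_def slack_bound_def by auto
  have last_le: "x (Suc N) \<le> x N" and last_nonneg: "0 \<le> x (Suc N)"
    using False admissible_le[OF adm, of N "Suc N"] admissible_nonneg[OF adm, of "Suc N"] by auto
  show ?thesis
  proof (cases "0 \<le> 1 - qs N * pprod x N")
    case True
    then have "x (Suc N) * (1 - qs N * pprod x N) \<le> x N * (1 - qs N * pprod x N)"
      using last_le by (simp add: mult_right_mono)
    then show ?thesis using J by (simp add: algebra_simps)
  next
    case False
    then have "x (Suc N) \<le> x (Suc N) * (qs N * pprod x N)"
      using last_nonneg by (simp add: mult_le_cancel_left1)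
    then show ?thesis using R by (simp add: algebra_simps)
  qed
qed simp

text \<open>Combined with the constraint p_(N+1) \<le> r (r the remainder), the previous bound gives
  r (1 + q_N) \<ge> 1/q_N, i.e. (R) at N+1, since q_(N+1) = q_N (q_N + 1).\<close>
lemma remainder_bound_Suc:
  assumes prev: "N \<ge> 1 \<Longrightarrow> remainder_bound N x \<and> slack_bound N x"
    and adm: "admissible (Suc N) x"
  shows "remainder_bound (Suc N) x"
proof -
  define r where "r = 1 - psum x (Suc N)"
  define q where "q = qs N"
  have q: "q \<ge> 1" unfolding q_def by (rule qs_ge_1)
  have "1 / q \<le> r + q * pprod x (Suc N)"
    using remainder_step[OF prev adm] by (simp add: r_def q_def)
  also have "\<dots> \<le> r + q * r"
    using admissible_constr[OF adm, of "Suc N"] q by (simp add: r_def)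
  finally have "1 / q \<le> r * (q + 1)" by (simp add: algebra_simps)
  then have "1 / q / (q + 1) \<le> r" using q by (subst pos_divide_le_eq) auto
  then show ?thesis unfolding remainder_bound_def qs_Suc by (simp add: r_def q_def)
qed

text \<open>Every inequality used for (R) at N+1 must be tight, which forces q_N p_N = 1.\<close>
lemma equality_step:
  assumes prev: "N \<ge> 1 \<Longrightarrow> remainder_bound N x \<and> slack_bound N x"
    and adm: "admissible (Suc N) x" and eq: "1 - psum x (Suc N) = 1 / qs (Suc N)"
  shows "x (Suc N) = 1 / (qs N + 1) \<and> 1 - psum x N = 1 / qs N"
proof -
  define q where "q = qs N"
  have q: "q \<ge> 1" unfolding q_def by (rule qs_ge_1)
  have r: "1 - psum x (Suc N) = 1 / (q * (q + 1))" using eq by (simp add: qs_Suc q_def)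
  have gap: "1 / q - 1 / (q * (q + 1)) = q * (1 / (q * (q + 1)))"
    using q by (simp add: divide_simps)
  have "q * (1 / (q * (q + 1))) \<le> q * pprod x (Suc N)"
    using remainder_step[OF prev adm] r gap by (simp add: q_def)
  then have "1 / (q * (q + 1)) \<le> pprod x (Suc N)"
    using q mult_le_cancel_left_pos[of q "1 / (q * (q + 1))" "pprod x (Suc N)"] by linarith
  then have P: "pprod x (Suc N) = 1 / (q * (q + 1))"
    using admissible_constr[OF adm, of "Suc N"] r by simp
  show ?thesis
  proof (cases "N = 0")
    case True
    then show ?thesis using P by (simp add: q_def)
  next
    case False
    define p where "p = pprod x N"
    define t where "t = x (Suc N)"
    define r0 where "r0 = 1 - psum x N"
    have R: "1 / q \<le> r0"
      and J: "x N * (1 - q * p) \<le> r0 - 1 / q"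
      and J_strict: "q * p < 1 \<Longrightarrow> x N * (1 - q * p) < r0 - 1 / q"
      using prev False by (auto simp: remainder_bound_def slack_bound_def r0_def q_def p_def)
    have pt: "p * t = 1 / (q * (q + 1))" using P by (simp add: p_def t_def)
    have "0 < p * t" using pt q by simp
    then have t_pos: "0 < t"
      using admissible_pprod_bounds[OF adm, of N] by (auto simp: p_def zero_less_mult_iff)
    have tight: "r0 - t = 1 / q - q * (p * t)"
      using r gap pt by (simp add: r0_def t_def algebra_simps)
    have qp: "q * p = 1"
    proof (rule ccontr)
      assume "q * p \<noteq> 1"
      then consider "q * p < 1" | "1 < q * p" by linarith
      then have "1 / q - q * (p * t) < r0 - t"
      proof cases
        case 1
        have "t * (1 - q * p) \<le> x N * (1 - q * p)"
          using 1 admissible_le[OF adm, of N "Suc N"] False by (intro mult_right_mono) (auto simp: t_def)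
        then show ?thesis using J_strict[OF 1] by (simp add: algebra_simps)
      next
        case 2
        then have "t < t * (q * p)" using t_pos by simp
        then show ?thesis using R by (simp add: algebra_simps)
      qed
      then show False using tight by simp
    qed
    then have "p = 1 / q" using q by (simp add: field_simps)
    then have "t / q = 1 / (q * (q + 1))" using pt by simp
    then have t: "t = 1 / (q + 1)" using q by (simp add: divide_simps)
    have "q * (p * t) = t" using qp by (simp add: mult.assoc[symmetric])
    then have "r0 = 1 / q" using tight by linarith
    then show ?thesis using t by (simp add: r0_def t_def q_def)
  qed
qed

section \<open>The slack bound: lengthening the final constant block\<close>

lemma power_diff_less:
  fixes t s :: real
  assumes "0 \<le> t" "t < s" "m \<ge> 1"
  shows "s^(m+1) - t^(m+1) < real (m+1) * s^m * (s - t)"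
proof -
  have "(\<Sum>i<m+1. t^(m+1 - Suc i) * s^i) < (\<Sum>i<m+1. s^m)"
  proof (rule sum_strict_mono_ex1)
    show "\<forall>i\<in>{..<m+1}. t^(m+1 - Suc i) * s^i \<le> s^m"
    proof
      fix i assume "i \<in> {..<m+1}"
      then have i: "i \<le> m" by auto
      have "t^(m - i) \<le> s^(m - i)" using assms by (intro power_mono) auto
      then have "t^(m+1 - Suc i) * s^i \<le> s^(m - i) * s^i"
        using assms by (intro mult_right_mono) auto
      also have "\<dots> = s^m" using i by (simp add: power_add[symmetric])
      finally show "t^(m+1 - Suc i) * s^i \<le> s^m" .
    qed
    show "\<exists>i\<in>{..<m+1}. t^(m+1 - Suc i) * s^i < s^m"
      using assms by (intro bexI[of _ 0]) (auto intro: power_strict_mono)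
  qed simp
  then have "(s - t) * (\<Sum>i<m+1. t^(m+1 - Suc i) * s^i) < (s - t) * (real (m+1) * s^m)"
    using assms by (intro mult_strict_left_mono) auto
  then show ?thesis using power_diff_sumr2[of s "m+1" t] by (simp add: algebra_simps)
qed

text \<open>The function s \<mapsto> (m+1) s - c s^(m+1) with c \<ge> 0 is strictly increasing on the range
  where c s^m \<le> 1 (its derivative (m+1)(1 - c s^m) is nonnegative there).\<close>
lemma slack_poly_strict_mono:
  fixes c t s :: real
  assumes "0 \<le> t" "t < s" "m \<ge> 1" "0 \<le> c" "c * s^m \<le> 1"
  shows "real (m+1) * t - c * t^(m+1) < real (m+1) * s - c * s^(m+1)"
proof (cases "c = 0")
  case True
  then show ?thesis using assms by simp
next
  case False
  then have "c * (s^(m+1) - t^(m+1)) < c * (real (m+1) * s^m * (s - t))"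
    using power_diff_less[OF assms(1-3)] assms(4) by (intro mult_strict_left_mono) auto
  also have "\<dots> = real (m+1) * (s - t) * (c * s^m)" by (simp add: algebra_simps)
  also have "\<dots> \<le> real (m+1) * (s - t)" using assms by (simp add: mult_left_le)
  finally show ?thesis by (simp add: algebra_simps)
qed

definition with_tail :: "nat \<Rightarrow> (nat \<Rightarrow> real) \<Rightarrow> real \<Rightarrow> nat \<Rightarrow> real" where
  "with_tail d x s = (\<lambda>k. if k \<le> d then x k else s)"

lemma psum_pprod_const_tail:
  assumes "d \<le> M" "\<forall>k. d < k \<and> k \<le> M \<longrightarrow> y k = s"
  shows "psum y M = psum y d + real (M - d) * s \<and> pprod y M = pprod y d * s^(M - d)"
  using assms
proof (induction M rule: dec_induct)
  case (step M)
  then have "y (Suc M) = s" and "Suc M - d = Suc (M - d)" by auto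
  with step show ?case by (simp add: algebra_simps)
qed simp

lemma with_tail_psum_pprod:
  assumes "d \<le> M"
  shows "psum (with_tail d x s) M = psum x d + real (M - d) * s"
    and "pprod (with_tail d x s) M = pprod x d * s^(M - d)"
proof -
  have prefix: "psum (with_tail d x s) d = psum x d" "pprod (with_tail d x s) d = pprod x d"
    unfolding psum_def pprod_def with_tail_def by (auto intro!: sum.cong prod.cong)
  have "\<forall>k. d < k \<and> k \<le> M \<longrightarrow> with_tail d x s k = s" by (simp add: with_tail_def)
  from psum_pprod_const_tail[OF assms this] prefix
  show "psum (with_tail d x s) M = psum x d + real (M - d) * s"
    and "pprod (with_tail d x s) M = pprod x d * s^(M - d)" by simp_all
qed

text \<open>Along a constant block the constraint j s + B s^j \<le> ... grows with the block length j
  (for 0 \<le> s, B \<le> 1), so only the constraint at the end of the block matters.\<close>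
lemma const_block_constr_mono:
  fixes s B :: real
  assumes "0 \<le> s" "s \<le> 1" "0 \<le> B" "B \<le> 1" "1 \<le> j" "j \<le> m"
  shows "real j * s + B * s^j \<le> real m * s + B * s^m"
proof (cases "j = m")
  case False
  then have jm: "real j + 1 \<le> real m" using assms by simp
  have "B * s^j \<le> s^j" using assms by (simp add: mult_left_le_one_le)
  also have "\<dots> \<le> s^1" using assms by (intro power_decreasing) auto
  finally have "B * s^j \<le> s" by simp
  moreover have "0 \<le> B * s^m" using assms by simp
  moreover have "(real j + 1) * s \<le> real m * s" using jm assms(1) by (rule mult_right_mono)
  ultimately show ?thesis by (simp add: algebra_simps)
qed simp

lemma with_tail_admissible:
  assumes adm: "admissible M x" and dM: "d < M"
    and s: "0 \<le> s" "d \<ge> 1 \<Longrightarrow> s \<le> x d" "s \<le> 1"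
    and last: "psum x d + real (M - d) * s + pprod x d * s^(M - d) \<le> 1"
  shows "admissible M (with_tail d x s)"
  unfolding admissible_def
proof (intro conjI ballI)
  fix k assume "k \<in> {1..M}"
  then show "0 \<le> with_tail d x s k"
    using admissible_nonneg[OF adm, of k] s(1) by (auto simp: with_tail_def)
next
  fix k assume k: "k \<in> {1..<M}"
  then show "with_tail d x s (Suc k) \<le> with_tail d x s k"
    using admissible_le[OF adm, of k "Suc k"] s by (cases "k = d") (auto simp: with_tail_def)
next
  fix k assume k: "k \<in> {1..M}"
  show "psum (with_tail d x s) k + pprod (with_tail d x s) k \<le> 1"
  proof (cases "k \<le> d")
    case True
    have "psum (with_tail d x s) k = psum x k" "pprod (with_tail d x s) k = pprod x k"
      using True unfolding psum_def pprod_def with_tail_def by (auto intro!: sum.cong prod.cong)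
    then show ?thesis using admissible_constr[OF adm, of k] True k dM by auto
  next
    case False
    have "real (k - d) * s + pprod x d * s^(k - d) \<le> real (M - d) * s + pprod x d * s^(M - d)"
      using False k s admissible_pprod_bounds[OF adm, of d] dM by (intro const_block_constr_mono) auto
    then show ?thesis using with_tail_psum_pprod[of d k x s] False last by simp
  qed
qed

text \<open>The one-variable core of the block argument.  Consider a vector whose last m coordinates
  form a constant block of value s, preceded by a prefix with sum A and product B.  With
  q = q_M, its slack inequality (J) reads
     A + m s + s (1 - q B s^m) \<le> 1 - 1/q   (strict if q B s^m < 1),
  its last constraint reads A + m s + B s^m \<le> 1, and (R) reads 1/q \<le> 1 - (A + m s).
  If (R) holds along the whole interval t \<le> s \<le> u of feasible block values and (J) holds at
  the top value u, then (J) holds at t: either q B t^m \<ge> 1 and (J) is immediate from (R), or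
  the left-hand side is strictly increasing in s and we compare with u or, via the
  intermediate value theorem, with the first s where the block becomes saturated.\<close>
lemma block_slack_real:
  fixes A B q t u :: real and m :: nat
  assumes m: "m \<ge> 1" and q: "q \<ge> 1" and B: "0 \<le> B" and t: "0 \<le> t" "t \<le> u"
    and constr_t: "A + real m * t + B * t^m \<le> 1"
    and remainder: "\<And>s. t \<le> s \<Longrightarrow> s \<le> u \<Longrightarrow> A + real m * s + B * s^m \<le> 1 \<Longrightarrow> 1/q \<le> 1 - (A + real m * s)"
    and slack_u: "A + real m * u + B * u^m \<le> 1 \<Longrightarrow> q * B * u^m \<le> 1 \<Longrightarrow>
        A + real m * u + u * (1 - q * B * u^m) \<le> 1 - 1/q
        \<and> (q * B * u^m < 1 \<longrightarrow> A + real m * u + u * (1 - q * B * u^m) < 1 - 1/q)"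
  shows "A + real m * t + t * (1 - q * B * t^m) \<le> 1 - 1/q
    \<and> (q * B * t^m < 1 \<longrightarrow> A + real m * t + t * (1 - q * B * t^m) < 1 - 1/q)"
proof -
  define \<phi> where "\<phi> s = A + real m * s + s * (1 - q * B * s^m)" for s
  define g where "g s = A + real m * s + B * s^m" for s
  have saturated: "\<phi> s \<le> 1 - 1/q" if "t \<le> s" "s \<le> u" "g s \<le> 1" "1 \<le> q * B * s^m" for s
  proof -
    have "1/q \<le> 1 - (A + real m * s)" using remainder that(1-3) by (simp add: g_def)
    moreover have "s * (1 - q * B * s^m) \<le> 0" using that t by (simp add: mult_nonneg_nonpos)
    ultimately show ?thesis by (simp add: \<phi>_def)
  qed
  have increasing: "\<phi> s1 < \<phi> s2" if "0 \<le> s1" "s1 < s2" "q * B * s2^m \<le> 1" for s1 s2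
    using slack_poly_strict_mono[OF that(1,2) m _ that(3)] q B by (simp add: \<phi>_def algebra_simps)
  have strict: "\<phi> t < 1 - 1/q" if unsat: "q * B * t^m < 1"
  proof (cases "g u \<le> 1 \<and> q * B * u^m \<le> 1")
    case True
    then have "\<phi> u \<le> 1 - 1/q" and "q * B * u^m < 1 \<Longrightarrow> \<phi> u < 1 - 1/q"
      using slack_u unfolding \<phi>_def g_def by auto
    then show ?thesis using increasing[of t u] True unsat t by (cases "t = u") auto
  next
    case False
    define \<psi> where "\<psi> s = max (q * B * s^m) (g s)" for s
    have "\<psi> t \<le> 1" using unsat constr_t by (simp add: \<psi>_def g_def)
    moreover have "1 \<le> \<psi> u" using False by (auto simp: \<psi>_def)
    moreover have "continuous_on {t..u} \<psi>" unfolding \<psi>_def g_def by (intro continuous_intros)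
    ultimately obtain s where s: "t \<le> s" "s \<le> u" "\<psi> s = 1" using IVT'[of \<psi> t 1 u] t by auto
    then have gs: "g s \<le> 1" "q * B * s^m \<le> 1" by (auto simp: \<psi>_def)
    have sat: "1 \<le> q * B * s^m"
    proof (cases "q * B * s^m = 1")
      case False
      then have "g s = 1" using s(3) gs by (auto simp: \<psi>_def max_def split: if_splits)
      moreover have "1/q \<le> 1 - (A + real m * s)" using remainder s(1,2) gs(1) by (simp add: g_def)
      ultimately have "1/q \<le> B * s^m" by (simp add: g_def)
      then show ?thesis using q by (simp add: field_simps)
    qed simp
    then have "t < s" using s(1) unsat by (cases "t = s") auto
    then have "\<phi> t < \<phi> s" using increasing t gs by auto
    also have "\<phi> s \<le> 1 - 1/q" using saturated s gs sat by auto
    finally show ?thesis .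
  qed
  have "\<phi> t \<le> 1 - 1/q"
    using strict saturated[of t] t constr_t by (cases "q * B * t^m < 1") (auto simp: g_def)
  with strict show ?thesis unfolding \<phi>_def by auto
qed

text \<open>If x is admissible and constant on
  its last block (d, M], then (J) holds for x provided it holds for every admissible vector
  that is constant on the longer block (d-1, M].  Raising the block of x to the height
  u = x_d produces such a vector; everything else is the real-variable lemma above.\<close>
lemma slack_bound_const_tail:
  assumes remainder: "\<And>y. admissible M y \<Longrightarrow> remainder_bound M y"
    and dM: "d < M" and adm: "admissible M x" and tail: "\<forall>k. d < k \<and> k \<le> M \<longrightarrow> x k = x M"
    and longer: "\<And>z. d \<ge> 1 \<Longrightarrow> admissible M z \<Longrightarrow> \<forall>k. d - 1 < k \<and> k \<le> M \<longrightarrow> z k = z M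
                 \<Longrightarrow> slack_bound M z"
  shows "slack_bound M x"
proof -
  define m A B q t where "m = M - d" and "A = psum x d" and "B = pprod x d"
    and "q = qs M" and "t = x M"
  define u where "u = (if d = 0 then 1 else x d)"
  have m: "m \<ge> 1" using dM by (simp add: m_def)
  have B: "0 \<le> B" "B \<le> 1" using admissible_pprod_bounds[OF adm, of d] dM by (auto simp: B_def)
  have t: "0 \<le> t" "t \<le> u"
    using admissible_nonneg[OF adm, of M] admissible_le_half[OF adm, of M]
      admissible_le[OF adm, of d M] dM by (auto simp: t_def u_def)
  have u: "u \<le> 1" using admissible_le_half[OF adm, of d] dM by (auto simp: u_def)
  have x_block: "psum x M = A + real m * t" "pprod x M = B * t^m"
    using psum_pprod_const_tail[OF _ tail] dM by (auto simp: A_def B_def m_def t_def)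
  have y_block: "psum (with_tail d x s) M = A + real m * s" "pprod (with_tail d x s) M = B * s^m"
    "with_tail d x s M = s" for s
    using with_tail_psum_pprod[of d M x s] dM by (auto simp: A_def B_def m_def with_tail_def)
  have y_adm: "admissible M (with_tail d x s)"
    if "0 \<le> s" "s \<le> u" "A + real m * s + B * s^m \<le> 1" for s
    using that u
    by (intro with_tail_admissible[OF adm dM]) (auto simp: u_def A_def B_def m_def split: if_splits)
  have "A + real m * t + t * (1 - q * B * t^m) \<le> 1 - 1/q
    \<and> (q * B * t^m < 1 \<longrightarrow> A + real m * t + t * (1 - q * B * t^m) < 1 - 1/q)"
  proof (rule block_slack_real[OF m _ B(1) t])
    show "q \<ge> 1" unfolding q_def by (rule qs_ge_1)
    show "A + real m * t + B * t^m \<le> 1"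
      using admissible_constr[OF adm, of M] dM x_block by simp
    show "1/q \<le> 1 - (A + real m * s)"
      if "t \<le> s" "s \<le> u" "A + real m * s + B * s^m \<le> 1" for s
      using remainder[OF y_adm] that t y_block by (simp add: remainder_bound_def q_def)
    assume u_constr: "A + real m * u + B * u^m \<le> 1"
    have d: "d \<ge> 1"
    proof (rule ccontr)
      assume "\<not> d \<ge> 1"
      then have "d = 0" by simp
      then have "A + real m * u + B * u^m = real m + 1" by (simp add: A_def B_def u_def)
      then show False using u_constr m by simp
    qed
    have "\<forall>k. d - 1 < k \<and> k \<le> M \<longrightarrow> with_tail d x u k = with_tail d x u M"
    proof (intro allI impI)
      fix k assume "d - 1 < k \<and> k \<le> M"
      then have "k = d \<or> d < k" by linarith
      then show "with_tail d x u k = with_tail d x u M" using d dM by (auto simp: with_tail_def u_def)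
    qed
    moreover have "0 \<le> u" using t by simp
    ultimately have "slack_bound M (with_tail d x u)"
      using longer[OF d y_adm[OF _ order_refl u_constr]] by blast
    then show "A + real m * u + u * (1 - q * B * u^m) \<le> 1 - 1/q
        \<and> (q * B * u^m < 1 \<longrightarrow> A + real m * u + u * (1 - q * B * u^m) < 1 - 1/q)"
      using y_block[of u] by (simp add: slack_bound_def q_def algebra_simps)
  qed
  then show ?thesis using x_block by (simp add: slack_bound_def q_def t_def algebra_simps)
qed

text \<open>(R) for all admissible vectors of length M implies (J) for them: induction on the
  start d of the final constant block, from the full block (0, M] down to the trivial
  block (M-1, M].\<close>
lemma slack_bound_admissible:
  assumes remainder: "\<And>y. admissible M y \<Longrightarrow> remainder_bound M y"
    and M: "M \<ge> 1" and adm: "admissible M x"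
  shows "slack_bound M x"
proof -
  have const_tail: "slack_bound M z" if "d < M" "admissible M z" "\<forall>k. d < k \<and> k \<le> M \<longrightarrow> z k = z M" for d z
    using that
  proof (induction d arbitrary: z)
    case 0
    show ?case
    proof (rule slack_bound_const_tail[OF remainder 0])
      fix w assume "(1::nat) \<le> 0"
      then show "slack_bound M w" by simp
    qed
  next
    case (Suc d)
    have "d < M" using Suc.prems(1) by simp
    show ?case
    proof (rule slack_bound_const_tail[OF remainder Suc.prems])
      fix w assume "1 \<le> Suc d" and w: "admissible M w" "\<forall>k. Suc d - 1 < k \<and> k \<le> M \<longrightarrow> w k = w M"
      from w(2) have "\<forall>k. d < k \<and> k \<le> M \<longrightarrow> w k = w M" by (simp only: diff_Suc_1)
      then show "slack_bound M w" by (rule Suc.IH[OF \<open>d < M\<close> w(1)])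
    qed
  qed
  have "\<forall>k. M - 1 < k \<and> k \<le> M \<longrightarrow> x k = x M"
  proof (intro allI impI)
    fix k assume "M - 1 < k \<and> k \<le> M"
    then have "k = M" by linarith
    then show "x k = x M" by simp
  qed
  moreover have "M - 1 < M" using M by simp
  ultimately show ?thesis using const_tail[OF _ adm] by blast
qed

lemma remainder_and_slack_bounds:
  "admissible N x \<Longrightarrow> remainder_bound N x \<and> (N \<ge> 1 \<longrightarrow> slack_bound N x)"
proof (induction N arbitrary: x)
  case 0
  then show ?case by (simp add: remainder_bound_def)
next
  case (Suc N)
  have remainder: "remainder_bound (Suc N) y" if "admissible (Suc N) y" for y
    using remainder_bound_Suc[OF _ that] Suc.IH[OF admissible_mono[OF that]] by simp
  then show ?case using slack_bound_admissible[OF remainder] Suc.prems by simp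
qed

lemma remainder_equality:
  assumes "admissible N x" "1 - psum x N = 1 / qs N" "k \<in> {1..N}"
  shows "x k = 1 / real (sylvester k)"
  using assms
proof (induction N)
  case (Suc N)
  have prev: "N \<ge> 1 \<Longrightarrow> remainder_bound N x \<and> slack_bound N x"
    using remainder_and_slack_bounds[OF admissible_mono[OF Suc.prems(1)]] by simp
  from equality_step[OF prev Suc.prems(1,2)]
  have last: "x (Suc N) = 1 / (qs N + 1)" and eq: "1 - psum x N = 1 / qs N" by auto
  show ?case
  proof (cases "k = Suc N")
    case True
    then show ?thesis using last by (simp add: sylvester_eq_qs)
  next
    case False
    then show ?thesis using Suc.IH[OF admissible_mono[OF Suc.prems(1)] eq] Suc.prems(3) by simp
  qed
qed simp

lemma Xset_remainder:
  assumes "x \<in> Xset n" "k \<le> n"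
  shows "1 - psum x k = (\<Sum>j=k+1..n. x j)"
proof -
  have "(\<Sum>j=1..n. x j) = psum x k + (\<Sum>j=k+1..n. x j)"
    using sum.ub_add_nat[of 1 k x "n - k"] assms(2) by (simp add: psum_def)
  then show ?thesis using assms(1) by (simp add: Xset_def)
qed

lemma Xset_descending: "x \<in> Xset n \<Longrightarrow> \<forall>k\<in>{1..<n}. x (Suc k) \<le> x k"
  by (simp add: Xset_def)

lemma Xset_admissible:
  assumes x: "x \<in> Xset n" and N: "N < n"
  shows "admissible N x"
  unfolding admissible_def
proof (intro conjI ballI)
  fix k assume k: "k \<in> {1..N}"
  have "0 \<le> x n" using x N by (simp add: Xset_def)
  also have "x n \<le> x k" using descending_le[OF Xset_descending[OF x], of k n] k N by simp
  finally show "0 \<le> x k" .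
next
  fix k assume "k \<in> {1..<N}"
  then show "x (Suc k) \<le> x k" using Xset_descending[OF x] N by simp
next
  fix k assume k: "k \<in> {1..N}"
  then have "pprod x k \<le> (\<Sum>j=k+1..n. x j)" using x N by (simp add: Xset_def pprod_def)
  then show "psum x k + pprod x k \<le> 1" using Xset_remainder[OF x, of k] k N by simp
qed

lemma Xset_tail_lower:
  assumes x: "x \<in> Xset n" and i: "i \<in> {1..n}"
  shows "1 / qs (i - 1) \<le> (\<Sum>j=i..n. x j)"
proof -
  have n: "i - 1 < n" and i_pred: "i - 1 + 1 = i" using i by auto
  have "remainder_bound (i - 1) x"
    using remainder_and_slack_bounds[OF Xset_admissible[OF x n]] by simp
  then show ?thesis
    using Xset_remainder[OF x less_imp_le[OF n]] unfolding i_pred by (simp add: remainder_bound_def)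
qed

lemma Xset_eq_xbar:
  assumes x: "x \<in> Xset n"
    and prefix: "\<forall>k\<in>{1..<i}. x k = 1 / real (sylvester k)"
    and block: "\<forall>k\<in>{i..n}. x k = 1 / (real (n - i + 1) * (real (sylvester i) - 1))"
  shows "x = xbar n i"
proof
  fix k
  have "k \<notin> {1..n} \<Longrightarrow> x k = 0" using x by (simp add: Xset_def)
  then show "x k = xbar n i k" using prefix block by (auto simp: xbar_def)
qed

theorem mainTheorem15:
  fixes n i :: nat and x :: "nat \<Rightarrow> real"
  assumes "i \<in> {1..n}" and "x \<in> Xset n"
  shows "x i \<ge> 1 / (real (n - i + 1) * (real (sylvester i) - 1))
    \<and> (x i = 1 / (real (n - i + 1) * (real (sylvester i) - 1)) \<longleftrightarrow> x = xbar n i)"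
proof -
  define c where "c = real (n - i + 1)"
  define b where "b = 1 / (c * (real (sylvester i) - 1))"
  have i: "1 \<le> i" "i \<le> n" and c: "0 < c" using assms(1) by (auto simp: c_def)
  have cb: "c * b = 1 / qs (i - 1)" using c by (simp add: b_def sylvester_eq_qs)
  note lower = Xset_tail_lower[OF assms(2,1)]
  note upper = descending_tail_sum[OF Xset_descending[OF assms(2)] i, folded c_def]
  have "c * b \<le> c * x i" using cb lower upper(1) by linarith
  then have bound: "b \<le> x i" using c by simp
  have "x i = b \<longleftrightarrow> x = xbar n i"
  proof
    assume "x i = b"
    then have tail: "(\<Sum>j=i..n. x j) = c * x i" and rem: "1 - psum x (i - 1) = 1 / qs (i - 1)"
      using cb lower upper(1) Xset_remainder[OF assms(2), of "i - 1"] i by auto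
    have "\<forall>k\<in>{1..<i}. x k = 1 / real (sylvester k)"
      using remainder_equality[OF Xset_admissible[OF assms(2)] rem] i by auto
    moreover have "\<forall>k\<in>{i..n}. x k = b" using upper(2)[OF tail] \<open>x i = b\<close> by auto
    ultimately show "x = xbar n i" using Xset_eq_xbar[OF assms(2)] by (simp add: b_def c_def)
  next
    assume "x = xbar n i"
    then show "x i = b" using i by (simp add: xbar_def b_def c_def)
  qed
  with bound show ?thesis by (simp add: b_def c_def)
qed

end
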